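(* The function $\phi$ is twice differentiable on $(0,1)$ and satisfies $0 < \phi''(u) < \phi'(u)/u$ for all $u \in (0,1)$.
   Context: $\log$ denotes the base-2 logarithm and $\ln$ the natural logarithm. Let $h(q) = -q\log q - (1-q)\log(1-q)$ be the binary entropy function on $[0,1]$ (with $0\log 0 = 0$). Define $\phi:[0,1]\to[0,1]$ by $\phi(u) = h\bigl(\tfrac{1-\sqrt{1-u^2}}{2}\bigr)$. *)

theory Defs
  imports "HOL-Analysis.Analysis"
begin

definition bin_entropy :: "real \<Rightarrow> real" where
  "bin_entropy q = (if q = 0 \<or> q = 1 then 0
      else - q * log 2 q - (1 - q) * log 2 (1 - q))"

definition phi :: "real \<Rightarrow> real" where
  "phi u = bin_entropy ((1 - sqrt (1 - u\<^sup>2)) / 2)"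

end

theory Submission
  imports Defs
begin

text \<open>Write \<open>s = sqrt (1 - u\<^sup>2)\<close>, so that \<open>\<phi>(u) = h((1 - s)/2)\<close>. Since
  \<open>h'(q) = log ((1 - q)/q)\<close> and the odds \<open>(1 - q)/q\<close> at \<open>q = (1 - s)/2\<close> are
  \<open>(1 + s)/(1 - s)\<close>, the chain rule gives the closed forms
  \<open>\<phi>'(u) = u artanh s / (s ln 2)\<close> and \<open>\<phi>''(u) = (artanh s - s) / (s\<^sup>3 ln 2)\<close>.
  Both inequalities then reduce to the elementary bounds \<open>s < artanh s < s / (1 - s\<^sup>2)\<close>
  on \<open>(0, 1)\<close>, each proved by monotonicity of the difference.\<close>

lemma artanh_greater_self:
  assumes "0 < s" "s < (1::real)"
  shows "s < artanh s"
proof -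
  have "artanh 0 - 0 < artanh s - s"
  proof (rule DERIV_pos_imp_increasing_open[OF assms(1)])
    fix x :: real assume x: "0 < x" "x < s"
    have d: "1 - x\<^sup>2 > 0" using x assms by (simp add: abs_square_less_1)
    have "((\<lambda>x. artanh x - x) has_real_derivative 1 / (1 - x\<^sup>2) - 1) (at x)"
      using x assms by (auto intro!: derivative_eq_intros)
    moreover have "1 / (1 - x\<^sup>2) - 1 = x\<^sup>2 / (1 - x\<^sup>2)"
      using d by (simp add: field_simps)
    ultimately show "\<exists>y. ((\<lambda>x. artanh x - x) has_real_derivative y) (at x) \<and> y > 0"
      using x d by auto
  qed (use assms in \<open>auto intro!: continuous_intros\<close>)
  then show ?thesis by simp
qed

lemma artanh_less_div_one_minus_square:
  assumes "0 < s" "s < (1::real)"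
  shows "artanh s < s / (1 - s\<^sup>2)"
proof -
  have "0 / (1 - 0\<^sup>2) - artanh 0 < s / (1 - s\<^sup>2) - artanh s"
  proof (rule DERIV_pos_imp_increasing_open[OF assms(1)])
    fix x :: real assume x: "0 < x" "x < s"
    have d: "1 - x\<^sup>2 > 0" using x assms by (simp add: abs_square_less_1)
    have "((\<lambda>x. x / (1 - x\<^sup>2) - artanh x) has_real_derivative
            (1 * (1 - x\<^sup>2) + x * (2 * x)) / (1 - x\<^sup>2)\<^sup>2 - 1 / (1 - x\<^sup>2)) (at x)"
      using x assms d by (auto intro!: derivative_eq_intros simp: power2_eq_square)
    moreover have "(1 * (1 - x\<^sup>2) + x * (2 * x)) / (1 - x\<^sup>2)\<^sup>2 - 1 / (1 - x\<^sup>2)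
                   = 2 * x\<^sup>2 / (1 - x\<^sup>2)\<^sup>2"
      using d by (simp add: divide_simps) (simp add: algebra_simps power2_eq_square)
    ultimately show "\<exists>y. ((\<lambda>x. x / (1 - x\<^sup>2) - artanh x) has_real_derivative y) (at x) \<and> y > 0"
      using x d by auto
  next
    have "\<forall>x\<in>{0..s}. 1 - x\<^sup>2 \<noteq> 0" using assms by (auto simp: abs_square_eq_1)
    then show "continuous_on {0..s} (\<lambda>x. x / (1 - x\<^sup>2) - artanh x)"
      using assms by (auto intro!: continuous_intros)
  qed
  then show ?thesis by simp
qed

lemma bin_entropy_has_real_derivative:
  assumes "0 < q" "q < (1::real)"
  shows "(bin_entropy has_real_derivative (ln (1 - q) - ln q) / ln 2) (at q)"
proof (rule has_field_derivative_transform_within_open)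
  show "((\<lambda>q. (- q * ln q - (1 - q) * ln (1 - q)) / ln 2) has_real_derivative
          (ln (1 - q) - ln q) / ln 2) (at q)"
    using assms by (auto intro!: derivative_eq_intros)
  show "(- x * ln x - (1 - x) * ln (1 - x)) / ln 2 = bin_entropy x" if "x \<in> {0<..<1}" for x
    using that by (simp add: bin_entropy_def log_def diff_divide_distrib)
qed (use assms in auto)

lemma sqrt_one_minus_square:
  assumes "0 < u" "u < (1::real)"
  shows "0 < sqrt (1 - u\<^sup>2)" "sqrt (1 - u\<^sup>2) < 1" "(sqrt (1 - u\<^sup>2))\<^sup>2 = 1 - u\<^sup>2"
  using assms by (auto simp: power_less_one_iff abs_square_less_1 less_imp_le)

lemma sqrt_one_minus_square_has_real_derivative:
  assumes "0 < u" "u < (1::real)"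
  shows "((\<lambda>u. sqrt (1 - u\<^sup>2)) has_real_derivative - u / sqrt (1 - u\<^sup>2)) (at u)"
  using assms sqrt_one_minus_square[OF assms]
  by (auto intro!: derivative_eq_intros simp: field_simps)

definition phi' :: "real \<Rightarrow> real" where
  "phi' u = u * artanh (sqrt (1 - u\<^sup>2)) / (sqrt (1 - u\<^sup>2) * ln 2)"

definition phi'' :: "real \<Rightarrow> real" where
  "phi'' u = (artanh (sqrt (1 - u\<^sup>2)) - sqrt (1 - u\<^sup>2)) / (sqrt (1 - u\<^sup>2) ^ 3 * ln 2)"

lemma phi_has_real_derivative:
  assumes "0 < u" "u < (1::real)"
  shows "(phi has_real_derivative phi' u) (at u)"
proof -
  define s where "s = sqrt (1 - u\<^sup>2)"
  have s: "0 < s" "s < 1" using sqrt_one_minus_square[OF assms] by (simp_all add: s_def)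
  have dq: "((\<lambda>u. (1 - sqrt (1 - u\<^sup>2)) / 2) has_real_derivative u / (2 * s)) (at u)"
    by (rule DERIV_cong[OF DERIV_cdivide[OF DERIV_diff[OF DERIV_const
          sqrt_one_minus_square_has_real_derivative[OF assms]]]]) (simp add: s_def)
  have dh: "(bin_entropy has_real_derivative 2 * artanh s / ln 2) (at ((1 - s) / 2))"
  proof (rule DERIV_cong[OF bin_entropy_has_real_derivative])
    have "ln (1 - (1 - s) / 2) - ln ((1 - s) / 2) = ln ((1 + s) / (1 - s))"
      using s by (simp add: ln_div field_simps)
    then show "(ln (1 - (1 - s) / 2) - ln ((1 - s) / 2)) / ln 2 = 2 * artanh s / ln 2"
      by (simp add: artanh_def)
  qed (use s in auto)
  have "phi = (\<lambda>u. bin_entropy ((1 - sqrt (1 - u\<^sup>2)) / 2))"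
    by (simp add: phi_def fun_eq_iff)
  moreover have "2 * artanh s / ln 2 * (u / (2 * s)) = phi' u"
    unfolding phi'_def s_def[symmetric] using s by (simp add: field_simps)
  ultimately show ?thesis
    using DERIV_chain2[OF dh[unfolded s_def] dq[unfolded s_def]] by (simp only: s_def)
qed

lemma phi'_has_real_derivative:
  assumes "0 < u" "u < (1::real)"
  shows "(phi' has_real_derivative phi'' u) (at u)"
proof -
  define s where "s = sqrt (1 - u\<^sup>2)"
  have s: "0 < s" "s < 1" "s\<^sup>2 + u\<^sup>2 = 1"
    using sqrt_one_minus_square[OF assms] by (simp_all add: s_def)
  have ds: "((\<lambda>u. sqrt (1 - u\<^sup>2)) has_real_derivative - u / s) (at u)"
    using sqrt_one_minus_square_has_real_derivative[OF assms] by (simp add: s_def)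
  have da: "((\<lambda>u. artanh (sqrt (1 - u\<^sup>2))) has_real_derivative - 1 / (u * s)) (at u)"
  proof (rule DERIV_cong[OF DERIV_chain2[OF artanh_real_has_field_derivative ds]])
    have "1 - s\<^sup>2 = u\<^sup>2" using s by simp
    then show "1 / (1 - (sqrt (1 - u\<^sup>2))\<^sup>2) * (- u / s) = - 1 / (u * s)"
      unfolding s_def[symmetric] using assms by (simp add: power2_eq_square)
  qed (use s in \<open>simp add: s_def[symmetric]\<close>)
  have "((\<lambda>u. u / sqrt (1 - u\<^sup>2) * artanh (sqrt (1 - u\<^sup>2)) / ln 2) has_real_derivative phi'' u) (at u)"
  proof (rule DERIV_cong[OF DERIV_cdivide[OF DERIV_mult[OF DERIV_divide[OF DERIV_ident ds] da]]])
    have "s * s + u * u = 1" using s by (simp add: power2_eq_square)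
    then show "((1 * sqrt (1 - u\<^sup>2) - u * (- u / s)) / (sqrt (1 - u\<^sup>2) * sqrt (1 - u\<^sup>2))
                 * artanh (sqrt (1 - u\<^sup>2)) + - 1 / (u * s) * (u / sqrt (1 - u\<^sup>2))) / ln 2
               = phi'' u"
      unfolding phi''_def s_def[symmetric] using s assms by (simp add: field_simps power3_eq_cube)
  qed (use s in \<open>simp add: s_def[symmetric]\<close>)
  moreover have "(\<lambda>u. u / sqrt (1 - u\<^sup>2) * artanh (sqrt (1 - u\<^sup>2)) / ln 2) = phi'"
    by (simp add: phi'_def fun_eq_iff)
  ultimately show ?thesis by simp
qed

lemma deriv_phi:
  assumes "0 < u" "u < (1::real)"
  shows "deriv phi u = phi' u"
  using DERIV_imp_deriv[OF phi_has_real_derivative[OF assms]] .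

lemma deriv_phi_has_real_derivative:
  assumes "0 < u" "u < (1::real)"
  shows "(deriv phi has_real_derivative phi'' u) (at u)"
proof (rule has_field_derivative_transform_within_open[of phi' _ _ "{0<..<1}"])
  show "(phi' has_real_derivative phi'' u) (at u)"
    using phi'_has_real_derivative[OF assms] .
qed (use assms deriv_phi in auto)

lemma phi''_pos:
  assumes "0 < u" "u < (1::real)"
  shows "0 < phi'' u"
  using sqrt_one_minus_square[OF assms] artanh_greater_self
  by (auto simp: phi''_def intro!: divide_pos_pos)

lemma phi''_less_phi'_div:
  assumes "0 < u" "u < (1::real)"
  shows "phi'' u < phi' u / u"
proof -
  define s where "s = sqrt (1 - u\<^sup>2)"
  have s: "0 < s" "s < 1" using sqrt_one_minus_square[OF assms] by (simp_all add: s_def)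
  have "1 - s\<^sup>2 > 0" using s by (simp add: power_less_one_iff)
  then have "artanh s - s < artanh s * s\<^sup>2"
    using artanh_less_div_one_minus_square[OF s] by (simp add: field_simps)
  then have "(artanh s - s) / (s ^ 3 * ln 2) < artanh s * s\<^sup>2 / (s ^ 3 * ln 2)"
    using s by (intro divide_strict_right_mono) auto
  also have "\<dots> = artanh s / (s * ln 2)"
    using s by (simp add: power2_eq_square power3_eq_cube)
  finally show ?thesis
    using assms by (simp add: phi''_def phi'_def s_def[symmetric])
qed

theorem lemma1:
  shows "(\<forall>u\<in>{0<..<1::real}. phi differentiable (at u)
            \<and> (deriv phi) differentiable (at u))
         \<and> (\<forall>u\<in>{0<..<1::real}. 0 < deriv (deriv phi) u
            \<and> deriv (deriv phi) u < deriv phi u / u)"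
proof -
  have "phi differentiable (at u) \<and> deriv phi differentiable (at u)"
    and "deriv (deriv phi) u = phi'' u" if "u \<in> {0<..<1}" for u
    using that phi_has_real_derivative[of u] deriv_phi_has_real_derivative[of u]
    by (auto simp: real_differentiable_def intro: DERIV_imp_deriv)
  then show ?thesis
    using deriv_phi phi''_pos phi''_less_phi'_div by auto
qed

end
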